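(* Let $q,d\geq 2$ be integers. For every $A\in\mathbb{N}$ and every $\mathbf{s}=(\theta_u,\theta_w,\theta_2,\theta_1,\theta_0)\in\mathbb{Z}^5$ (a row vector), $$\gamma(qA,q,d;\mathbf{s})=\sum_{\lambda=0}^{q-1}\gamma(A,q,d;\mathbf{s}M_\lambda),$$ where, for each $\lambda\in\{0,\ldots,q-1\}$, $$M_\lambda=\begin{pmatrix} q & \lambda-q+1 & q & \lambda-q+1 & 0\\ 0 & 1 & 0 & 1 & 0\\ 0 & 0 & q^2 & \lambda q-\frac{q(q-1)}{2} & \frac{\lambda(\lambda+1)}{2}\\ 0 & 0 & 0 & q & \lambda\\ 0 & 0 & 0 & 0 & 1 \end{pmatrix}.$$
   Context: For an integer $q\geq 2$ and $n\in\mathbb{N}=\{0,1,2,\ldots\}$: $v_q(0)=0$ and, for $n>0$, $v_q(n)=\max\{k\in\mathbb{N}: q^k\mid n\}$; $w_q(n)=\sum_{i=0}^n v_q(i)$; $u_q(n)=\sum_{i=0}^n w_q(i)$. For $\mathbf{s}=(\theta_u,\theta_w,\theta_2,\theta_1,\theta_0)\in\mathbb{Z}^5$ and $A\in\mathbb{N}$, $\gamma(A,q,d;\mathbf{s})$ denotes the number of $n\in\mathbb{N}$ with $n<A$ such that $\theta_u u_q(n)+\theta_w w_q(n)+\theta_2\frac{n(n+1)}{2}+\theta_1 n+\theta_0\equiv 0 \pmod d$. *)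

theory Defs
  imports Main
begin

definition vq :: "nat \<Rightarrow> nat \<Rightarrow> nat" where
  "vq q n = (if n = 0 then 0 else Max {k. q ^ k dvd n})"

definition wq :: "nat \<Rightarrow> nat \<Rightarrow> nat" where
  "wq q n = (\<Sum>i\<le>n. vq q i)"

definition uq :: "nat \<Rightarrow> nat \<Rightarrow> nat" where
  "uq q n = (\<Sum>i\<le>n. wq q i)"

text \<open>Parameter vectors s = (theta_u, theta_w, theta_2, theta_1, theta_0) are
  int lists of length 5 (index 0 = theta_u, ..., index 4 = theta_0).\<close>

definition gamma :: "nat \<Rightarrow> nat \<Rightarrow> int \<Rightarrow> int list \<Rightarrow> nat" where
  "gamma A q d s = card {n. n < A \<and>
     (s!0 * int (uq q n) + s!1 * int (wq q n) + s!2 * int (n * (n + 1) div 2)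
      + s!3 * int n + s!4) mod d = 0}"

definition row_mat_mult :: "int list \<Rightarrow> int list list \<Rightarrow> int list" where
  "row_mat_mult s M = map (\<lambda>j. \<Sum>i<5. s!i * M!i!j) [0..<5]"

definition Mlam :: "int \<Rightarrow> int \<Rightarrow> int list list" where
  "Mlam q l =
    [[q, l - q + 1, q, l - q + 1, 0],
     [0, 1, 0, 1, 0],
     [0, 0, q^2, l * q - q * (q - 1) div 2, l * (l + 1) div 2],
     [0, 0, 0, q, l],
     [0, 0, 0, 0, 1]]"

end

theory Submission
  imports Defs
begin

text \<open>Write n = q m + l with 0 \<le> l < q. Then v(n) = 0 unless l = 0, and v(q m) = v(m) + 1,
  so w(q m + l) = m + w(m); summing once more, u(q m + l) is an integer combination of
  u(m), w(m), m(m+1)/2, m and 1 whose coefficients depend only on q and l, and so is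
  (q m + l)(q m + l + 1)/2. Hence the linear form with coefficient vector s evaluated at
  q m + l equals the form with coefficient vector s M_l evaluated at m, and counting the
  zeros mod d of the former below q A splits into q counts of zeros of the latter below A.\<close>

lemma finite_power_dvd:
  fixes q n :: nat
  assumes "q \<ge> 2" "n > 0"
  shows "finite {k. q ^ k dvd n}"
proof (rule finite_subset)
  show "{k. q ^ k dvd n} \<subseteq> {..<n}"
  proof
    fix k assume "k \<in> {k. q ^ k dvd n}"
    then have "q ^ k \<le> n" using assms by (simp add: dvd_imp_le)
    moreover have "k < 2 ^ k" by (rule less_exp)
    moreover have "(2::nat) ^ k \<le> q ^ k" using assms by (simp add: power_mono)
    ultimately have "k < n" by linarith
    then show "k \<in> {..<n}" by simp
  qed
qed simp

lemma vq_eq_0_if_not_dvd: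
  assumes "\<not> q dvd n"
  shows "vq q n = 0"
proof -
  have "{k. q ^ k dvd n} = {0}"
    using assms by (auto intro: dvd_trans[OF dvd_power[of _ q]])
  then show ?thesis by (simp add: vq_def)
qed

lemma vq_mult_self:
  fixes q n :: nat
  assumes "q \<ge> 2" "n > 0"
  shows "vq q (q * n) = Suc (vq q n)"
proof -
  let ?K = "{k. q ^ k dvd n}"
  have fin: "finite ?K" using finite_power_dvd assms by blast
  have ne: "?K \<noteq> {}" by (metis empty_iff mem_Collect_eq one_dvd power_0)
  have "{k. q ^ k dvd q * n} = insert 0 (Suc ` ?K)"
  proof safe
    fix k assume k: "q ^ k dvd q * n" "k \<notin> Suc ` ?K"
    show "k = 0"
    proof (cases k)
      case (Suc j)
      then have "q ^ j dvd n" using k(1) assms by simp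
      then show ?thesis using k(2) Suc by blast
    qed
  qed (auto simp: mult_dvd_mono)
  moreover have "Max (Suc ` ?K) = Suc (Max ?K)"
    using fin ne by (simp add: mono_Max_commute[symmetric] mono_Suc)
  ultimately show ?thesis using assms fin ne by (simp add: vq_def)
qed

lemma wq_0 [simp]: "wq q 0 = 0"
  by (simp add: wq_def vq_def)

lemma uq_0 [simp]: "uq q 0 = 0"
  by (simp add: uq_def)

lemma wq_Suc: "wq q (Suc n) = wq q n + vq q (Suc n)"
  by (simp add: wq_def)

lemma uq_Suc: "uq q (Suc n) = uq q n + wq q (Suc n)"
  by (simp add: uq_def)

lemma wq_mult_add_eq_wq_mult:
  assumes "l < q"
  shows "wq q (q * m + l) = wq q (q * m)"
  using assms
proof (induction l)
  case (Suc l)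
  have "\<not> q dvd Suc (q * m + l)"
  proof
    assume "q dvd Suc (q * m + l)"
    then have "q dvd Suc l" by (metis add_Suc_right dvd_add_right_iff dvd_triv_left)
    then show False using Suc.prems dvd_imp_le by fastforce
  qed
  then show ?case using Suc by (simp add: wq_Suc vq_eq_0_if_not_dvd)
qed simp

lemma wq_mult_self:
  assumes "q \<ge> 2"
  shows "wq q (q * m) = m + wq q m"
proof (induction m)
  case (Suc m)
  have "wq q (q * Suc m) = wq q (q * m + (q - 1)) + vq q (q * Suc m)"
    using wq_Suc[of q "q * m + (q - 1)"] assms by (simp add: Suc_diff_le add.commute)
  also have "\<dots> = wq q (q * m) + Suc (vq q (Suc m))"
    using wq_mult_add_eq_wq_mult[of "q - 1" q m] vq_mult_self[of q "Suc m"] assms by simp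
  finally show ?case using Suc by (simp add: wq_Suc)
qed simp

lemma wq_mult_add:
  assumes "q \<ge> 2" "l < q"
  shows "wq q (q * m + l) = m + wq q m"
  using wq_mult_add_eq_wq_mult wq_mult_self assms by simp

lemma uq_mult_add_eq_uq_mult:
  assumes "q \<ge> 2" "l < q"
  shows "uq q (q * m + l) = uq q (q * m) + l * (m + wq q m)"
  using assms(2)
proof (induction l)
  case (Suc l)
  then show ?case using wq_mult_add[OF assms(1) Suc.prems, of m] by (simp add: uq_Suc)
qed simp

lemma uq_mult_self:
  assumes "q \<ge> 2"
  shows "int (uq q (q * m)) = int q * int (uq q m) + int q * int (m * (m + 1) div 2)
    + (1 - int q) * (int m + int (wq q m))"
proof (induction m)
  case (Suc m)
  have "uq q (q * Suc m) = uq q (q * m + (q - 1)) + wq q (q * Suc m)"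
    using uq_Suc[of q "q * m + (q - 1)"] assms by (simp add: Suc_diff_le add.commute)
  also have "\<dots> = uq q (q * m) + (q - 1) * (m + wq q m) + (Suc m + wq q (Suc m))"
    using uq_mult_add_eq_uq_mult[of q "q - 1" m] wq_mult_self[OF assms, of "Suc m"] assms by simp
  finally have "int (uq q (q * Suc m))
      = int (uq q (q * m)) + (int q - 1) * (int m + int (wq q m)) + int (Suc m) + int (wq q (Suc m))"
    using assms by simp
  moreover have "int (Suc m * (Suc m + 1) div 2) = int (m * (m + 1) div 2) + int m + 1"
    by (induction m) auto
  moreover have "int (uq q (Suc m)) = int (uq q m) + int (wq q (Suc m))"
    by (simp add: uq_Suc)
  ultimately show ?case
    using Suc.IH unfolding of_nat_Suc by algebra
qed simp

lemma uq_mult_add: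
  assumes "q \<ge> 2" "l < q"
  shows "int (uq q (q * m + l)) = int q * int (uq q m) + int q * int (m * (m + 1) div 2)
    + (int l - int q + 1) * (int m + int (wq q m))"
proof -
  have "int (uq q (q * m + l)) = int (uq q (q * m)) + int l * (int m + int (wq q m))"
    using uq_mult_add_eq_uq_mult[OF assms, of m] by simp
  with uq_mult_self[OF assms(1), of m] show ?thesis by algebra
qed

lemma int_triangle: "2 * int (n * (n + 1) div 2) = int n * (int n + 1)"
proof -
  have "2 * (n * (n + 1) div 2) = n * (n + 1)" by simp
  then have "int (2 * (n * (n + 1) div 2)) = int (n * (n + 1))" by (rule arg_cong)
  then show ?thesis unfolding of_nat_mult of_nat_add of_nat_numeral of_nat_1 .
qed

lemma triangle_mult_add:
  fixes q m l :: nat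
  shows "int ((q * m + l) * (q * m + l + 1) div 2) = int q ^ 2 * int (m * (m + 1) div 2)
     + (int l * int q - int q * (int q - 1) div 2) * int m + int l * (int l + 1) div 2"
proof -
  have expand: "X = Q^2 * T + (L * Q - D) * M + C"
    if "2 * X = (Q * M + L) * (Q * M + L + 1)" "2 * T = M * (M + 1)"
      "2 * C = L * (L + 1)" "2 * D = Q * (Q - 1)" for X T C D Q M L :: int
    using that by algebra
  have "2 * int ((q * m + l) * (q * m + l + 1) div 2)
      = (int q * int m + int l) * (int q * int m + int l + 1)"
    using int_triangle[of "q * m + l"] by simp
  then show ?thesis
    by (rule expand) (rule int_triangle, simp_all)
qed

definition gamma_form :: "nat \<Rightarrow> int list \<Rightarrow> nat \<Rightarrow> int" where
  "gamma_form q s n = s!0 * int (uq q n) + s!1 * int (wq q n) + s!2 * int (n * (n + 1) div 2)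
      + s!3 * int n + s!4"

lemma gamma_eq_card_gamma_form:
  "gamma A q d s = card {n. n < A \<and> gamma_form q s n mod d = 0}"
  by (simp add: gamma_def gamma_form_def)

lemma row_mat_mult_Mlam:
  "row_mat_mult s (Mlam q l) =
    [s!0 * q,
     s!0 * (l - q + 1) + s!1,
     s!0 * q + s!2 * q^2,
     s!0 * (l - q + 1) + s!1 + s!2 * (l * q - q * (q - 1) div 2) + s!3 * q,
     s!2 * (l * (l + 1) div 2) + s!3 * l + s!4]"
  by (simp add: row_mat_mult_def Mlam_def eval_nat_numeral)

lemma gamma_form_mult_add:
  assumes "q \<ge> 2" "l < q"
  shows "gamma_form q s (q * m + l) = gamma_form q (row_mat_mult s (Mlam (int q) (int l))) m"
  unfolding gamma_form_def row_mat_mult_Mlam uq_mult_add[OF assms] wq_mult_add[OF assms]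
    triangle_mult_add
  by (simp add: algebra_simps power2_eq_square)

lemma card_less_mult_eq_sum_card:
  fixes q A :: nat
  assumes "q > 0"
  shows "card {n. n < q * A \<and> P n} = (\<Sum>l<q. card {m. m < A \<and> P (q * m + l)})"
proof -
  have "bij_betw (\<lambda>(l, m). q * m + l)
      (SIGMA l:{..<q}. {m. m < A \<and> P (q * m + l)}) {n. n < q * A \<and> P n}"
  proof (rule bij_betw_byWitness[where f' = "\<lambda>n. (n mod q, n div q)"])
    show "(\<lambda>(l, m). q * m + l) ` (SIGMA l:{..<q}. {m. m < A \<and> P (q * m + l)})
        \<subseteq> {n. n < q * A \<and> P n}"
    proof clarify
      fix l m assume "l < q" "m < A"
      then have "q * m + l < q * (m + 1)" by simp
      also have "\<dots> \<le> q * A" using \<open>m < A\<close> by (intro mult_le_mono2) simp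
      finally show "q * m + l < q * A" .
    qed
    show "(\<lambda>n. (n mod q, n div q)) ` {n. n < q * A \<and> P n}
        \<subseteq> (SIGMA l:{..<q}. {m. m < A \<and> P (q * m + l)})"
      using assms by (auto simp: less_mult_imp_div_less mult.commute)
  qed (use assms in auto)
  then have "card {n. n < q * A \<and> P n} = card (SIGMA l:{..<q}. {m. m < A \<and> P (q * m + l)})"
    by (simp add: bij_betw_same_card)
  also have "\<dots> = (\<Sum>l<q. card {m. m < A \<and> P (q * m + l)})"
    by (rule card_SigmaI) auto
  finally show ?thesis .
qed

theorem proposition2p3:
  fixes q :: nat and d :: int and A :: nat and s :: "int list"
  assumes "q \<ge> 2" and "d \<ge> 2" and "length s = 5"
  shows "gamma (q * A) q d s =
    (\<Sum>l<q. gamma A q d (row_mat_mult s (Mlam (int q) (int l))))"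
proof -
  have "gamma (q * A) q d s = (\<Sum>l<q. card {m. m < A \<and> gamma_form q s (q * m + l) mod d = 0})"
    unfolding gamma_eq_card_gamma_form using assms(1) by (simp add: card_less_mult_eq_sum_card)
  also have "\<dots> = (\<Sum>l<q. gamma A q d (row_mat_mult s (Mlam (int q) (int l))))"
    unfolding gamma_eq_card_gamma_form using assms(1) by (simp add: gamma_form_mult_add)
  finally show ?thesis .
qed

end
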